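(* Let $n\ge1$ and let $K$ be a simplicial complex on $[m]$. For $k\in[m]$ let $\mathrm{Crit}_k=\mathrm{Crit}(K_{[k]})$ (with $K_{[k]}$ regarded as a complex on $[k]$), and for $k\in[m-1]$ let $\mathrm{Crit}_{k\bullet}=\mathrm{Crit}(\mathrm{link}_{K_{[k+1]}}(k+1))$ (regarded as a complex on $[k]$). Then: (i) $\mathrm{Crit}_1=\{e_-^0\}$ if $\{1\}\in K$, and $\mathrm{Crit}_1=\{e_-^0,e_+^{n-1}\}$ if $\{1\}\notin K$. (ii) For $k\in[m-1]$, $$\mathrm{Crit}_{k+1}=\big(\mathrm{Crit}_k^-\cup\mathrm{Crit}_k^+\cup\mathrm{Crit}_{k\bullet}^\bullet\big)\setminus\big(\mathrm{Crit}_k^\bullet\cup\mathrm{Crit}_{k\bullet}^+\big).$$ In particular, every critical cell of $\mathcal{M}_K$ is a product of cells from $\{e_-^0,e_+^{n-1},e_\bullet^n\}$.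
   Context: Give $D^n$ the regular CW structure with cells $e_-^i,e_+^i$ for $0\le i\le n-1$ (for each $i$, $e_\pm^i$ are the two open hemispheres of $S^i\subseteq S^{n-1}$, so the closure of $e_\pm^{i}$ is $e_\pm^i\cup\bigcup_{j<i}(e_-^j\cup e_+^j)$) and the top cell $e_\bullet^n$ with boundary $S^{n-1}$; give $(D^n)^k$ the product cell structure with cells $c=c_1\times\dots\times c_k$. A simplicial complex $L$ on $[k]$ is a family of subsets of $[k]$ closed under subsets (possibly empty as a family). For a cell $c$ let $\mathrm{supp}(c)=\{i:c_i=e_\bullet^n\}$; $\mathcal{Z}_L(D^n,S^{n-1})$ is the subcomplex of cells $c$ with $\mathrm{supp}(c)\in L$. $G_L$ is the directed graph on these cells with an edge $c\to c'$ when $c'$ lies in the closure of $c$ and $\dim c'=\dim c-1$. Let $\mathcal{M}$ consist of the edges $e_-^{i+1}\to e_+^i$ ($0\le i\le n-2$) and $e_\bullet^n\to e_+^{n-1}$. Put $\mathcal{M}_1=\{c\to c'\in G_L: c_1\to c_1'\in\mathcal{M}\}$ and, for $1\le j\le k-1$, $\mathcal{M}_{j+1}=\{c\to c'\in G_L:$ neither $c$ nor $c'$ lies in an edge of $\mathcal{M}_1\cup\dots\cup\mathcal{M}_j$, and $c_{j+1}\to c'_{j+1}\in\mathcal{M}\}$; $\mathcal{M}_L=\bigcup_j\mathcal{M}_j$. $\mathrm{Crit}(L)$ is the set of cells of $\mathcal{Z}_L(D^n,S^{n-1})$ lying in no edge of $\mathcal{M}_L$ (critical cells). $K_{[k]}=\{\sigma\in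 K:\sigma\subseteq[k]\}$ and $\mathrm{link}_L(v)=\{\sigma\in L: v\notin\sigma,\ \sigma\cup\{v\}\in L\}$. For a set $\mathcal{C}$ of cells of $(D^n)^k$, $\mathcal{C}^-=\{c\times e_-^0: c\in\mathcal{C}\}$, $\mathcal{C}^+=\{c\times e_+^{n-1}: c\in\mathcal{C}\}$, $\mathcal{C}^\bullet=\{c\times e_\bullet^n:c\in\mathcal{C}\}$ (cells of $(D^n)^{k+1}$). *)

theory Defs
  imports Main
begin

text \<open>Cells of the disc D^n: Mn i = e_-^i, Pl i = e_+^i (0 <= i <= n-1), Bt = e_bullet^n.\<close>
datatype dcell = Mn nat | Pl nat | Bt

definition valid_dcell :: "nat \<Rightarrow> dcell \<Rightarrow> bool" where
  "valid_dcell n e = (case e of Mn i \<Rightarrow> i < n | Pl i \<Rightarrow> i < n | Bt \<Rightarrow> True)"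

definition ddim :: "nat \<Rightarrow> dcell \<Rightarrow> nat" where
  "ddim n e = (case e of Mn i \<Rightarrow> i | Pl i \<Rightarrow> i | Bt \<Rightarrow> n)"

definition in_dclos :: "nat \<Rightarrow> dcell \<Rightarrow> dcell \<Rightarrow> bool" where
  "in_dclos n e' e = (e' = e \<or> (e = Bt \<and> valid_dcell n e') \<or>
     (\<exists>i j. (e = Mn i \<or> e = Pl i) \<and> (e' = Mn j \<or> e' = Pl j) \<and> j < i))"

text \<open>Product cells of (D^n)^k: lists of length k; coordinate i (1-based) is entry i-1.\<close>
definition pcells :: "nat \<Rightarrow> nat \<Rightarrow> dcell list set" where
  "pcells k n = {c. length c = k \<and> (\<forall>e\<in>set c. valid_dcell n e)}"

definition pdim :: "nat \<Rightarrow> dcell list \<Rightarrow> nat" where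
  "pdim n c = sum_list (map (ddim n) c)"

definition supp :: "dcell list \<Rightarrow> nat set" where
  "supp c = {i. 1 \<le> i \<and> i \<le> length c \<and> c ! (i - 1) = Bt}"

definition simplicial_complex :: "nat \<Rightarrow> nat set set \<Rightarrow> bool" where
  "simplicial_complex k L = ((\<forall>\<sigma>\<in>L. \<sigma> \<subseteq> {1..k}) \<and> (\<forall>\<sigma>\<in>L. \<forall>\<tau>. \<tau> \<subseteq> \<sigma> \<longrightarrow> \<tau> \<in> L))"

text \<open>Cells of the polyhedral product Z_L(D^n, S^{n-1}) for L on [k].\<close>
definition ZL :: "nat set set \<Rightarrow> nat \<Rightarrow> nat \<Rightarrow> dcell list set" where
  "ZL L k n = {c \<in> pcells k n. supp c \<in> L}"

definition GL :: "nat set set \<Rightarrow> nat \<Rightarrow> nat \<Rightarrow> (dcell list \<times> dcell list) set" where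
  "GL L k n = {(c, c'). c \<in> ZL L k n \<and> c' \<in> ZL L k n \<and> list_all2 (in_dclos n) c' c
                 \<and> pdim n c' + 1 = pdim n c}"

definition Mbase :: "nat \<Rightarrow> (dcell \<times> dcell) set" where
  "Mbase n = {(Mn (i + 1), Pl i) | i. i + 2 \<le> n} \<union> {(Bt, Pl (n - 1))}"

definition verts :: "('a \<times> 'a) set \<Rightarrow> 'a set" where
  "verts E = fst ` E \<union> snd ` E"

primrec Mupto :: "nat set set \<Rightarrow> nat \<Rightarrow> nat \<Rightarrow> nat \<Rightarrow> (dcell list \<times> dcell list) set" where
  "Mupto L k n 0 = {}"
| "Mupto L k n (Suc j) = Mupto L k n j \<union>
     {(c, c') \<in> GL L k n. c \<notin> verts (Mupto L k n j) \<and> c' \<notin> verts (Mupto L k n j)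
        \<and> (c ! j, c' ! j) \<in> Mbase n}"

definition Mmatch :: "nat set set \<Rightarrow> nat \<Rightarrow> nat \<Rightarrow> (dcell list \<times> dcell list) set" where
  "Mmatch L k n = Mupto L k n k"

definition Crit :: "nat set set \<Rightarrow> nat \<Rightarrow> nat \<Rightarrow> dcell list set" where
  "Crit L k n = ZL L k n - verts (Mmatch L k n)"

definition restr :: "nat set set \<Rightarrow> nat \<Rightarrow> nat set set" where
  "restr K k = {\<sigma> \<in> K. \<sigma> \<subseteq> {1..k}}"

definition link :: "nat set set \<Rightarrow> nat \<Rightarrow> nat set set" where
  "link L v = {\<sigma> \<in> L. v \<notin> \<sigma> \<and> insert v \<sigma> \<in> L}"

definition ext_minus :: "dcell list set \<Rightarrow> dcell list set" where
  "ext_minus C = (\<lambda>c. c @ [Mn 0]) ` C"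

definition ext_plus :: "nat \<Rightarrow> dcell list set \<Rightarrow> dcell list set" where
  "ext_plus n C = (\<lambda>c. c @ [Pl (n - 1)]) ` C"

definition ext_bullet :: "dcell list set \<Rightarrow> dcell list set" where
  "ext_bullet C = (\<lambda>c. c @ [Bt]) ` C"

end

theory Submission
  imports Defs
begin

text \<open>
  Write a cell of \<open>(D^n)^(k+1)\<close> as \<open>d @ [x]\<close>. The first \<open>k\<close> stages of the matching never
  change the last coordinate, and \<open>d @ [x]\<close> lies in \<open>Z_L\<close> exactly when \<open>d\<close> lies in the
  polyhedral product of \<open>L\<close> (if \<open>x\<close> is not the top cell) or of the closed star of \<open>k+1\<close>
  (if it is); so these stages are the matchings of those two complexes on \<open>[k]\<close>, fibrewise.
  The last stage pairs \<open>d @ [x]\<close> with \<open>d @ [y]\<close> along the matching of \<open>D^n\<close> whenever \<open>d\<close>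
  is critical in both fibres. Apart from \<open>e\<^sup>0\<^sub>-\<close>, \<open>e\<^sup>n\<^sup>-\<^sup>1\<^sub>+\<close> and the top cell, every cell of \<open>D^n\<close>
  has a partner over the same complex \<open>L\<close>, so nothing survives there; \<open>e\<^sup>0\<^sub>-\<close> has no partner;
  and the edge from the top cell to \<open>e\<^sup>n\<^sup>-\<^sup>1\<^sub>+\<close> cancels exactly the \<open>d\<close> critical for both
  complexes. For \<open>L = K\<^sub>[\<^sub>k\<^sub>+\<^sub>1\<^sub>]\<close>, the closed star of \<open>k+1\<close> restricted to \<open>[k]\<close> is the link.
\<close>

definition closed_star :: "nat set set \<Rightarrow> nat \<Rightarrow> nat set set" where
  "closed_star L v = {\<sigma>. insert v \<sigma> \<in> L}"

definition slice_complex :: "nat set set \<Rightarrow> nat \<Rightarrow> dcell \<Rightarrow> nat set set" where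
  "slice_complex L k x = (if x = Bt then closed_star L (Suc k) else L)"

lemma supp_snoc:
  "length d = k \<Longrightarrow> supp (d @ [x]) = (if x = Bt then insert (Suc k) (supp d) else supp d)"
  unfolding supp_def by (auto simp: nth_append le_Suc_eq split: if_splits)

lemma ZL_snoc_iff:
  "length d = k \<Longrightarrow> d @ [x] \<in> ZL L (Suc k) n \<longleftrightarrow> valid_dcell n x \<and> d \<in> ZL (slice_complex L k x) k n"
  unfolding ZL_def pcells_def slice_complex_def closed_star_def by (auto simp: supp_snoc)

lemma ZL_length: "c \<in> ZL L k n \<Longrightarrow> length c = k"
  unfolding ZL_def pcells_def by auto

lemma in_dclos_eq_or_ddim_less: "in_dclos n e' e \<Longrightarrow> e' = e \<or> ddim n e' < ddim n e"
  unfolding in_dclos_def ddim_def valid_dcell_def by (auto split: dcell.splits)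

lemma Mbase_iff:
  "(a, b) \<in> Mbase n \<longleftrightarrow> (\<exists>i. a = Mn (Suc i) \<and> b = Pl i \<and> i + 2 \<le> n) \<or> (a = Bt \<and> b = Pl (n - 1))"
  unfolding Mbase_def by auto

lemma Mbase_facet: "n \<ge> 1 \<Longrightarrow> (a, b) \<in> Mbase n \<Longrightarrow> in_dclos n b a \<and> ddim n b + 1 = ddim n a"
  unfolding Mbase_iff ddim_def in_dclos_def valid_dcell_def by auto

text \<open>The total dimension drops by one, already by one in coordinate \<open>j\<close>, and passing to the
  closure never raises the dimension of a coordinate; so all other coordinates are unchanged.\<close>
lemma GL_edge_eq_off_coordinate:
  assumes edge: "(c, c') \<in> GL L k n" and "j < k" and drop: "ddim n (c' ! j) + 1 = ddim n (c ! j)"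
  shows "c' = c[j := c' ! j]"
proof -
  have len: "length c = k" "length c' = k" using edge by (auto simp: GL_def ZL_length)
  have clos: "in_dclos n (c' ! i) (c ! i)" if "i < k" for i
    using edge len that by (auto simp: GL_def list_all2_conv_all_nth)
  define f where "f i = ddim n (c ! i)" for i
  define g where "g i = ddim n (c' ! i)" for i
  have le: "g i \<le> f i" if "i < k" for i
    unfolding f_def g_def using in_dclos_eq_or_ddim_less[OF clos[OF that]] by fastforce
  have j: "j \<in> {0..<k}" using \<open>j < k\<close> by simp
  have "sum g {0..<k} + 1 = sum f {0..<k}"
    using edge len by (simp add: GL_def pdim_def sum_list_sum_nth f_def g_def)
  then have "sum g ({0..<k} - {j}) = sum f ({0..<k} - {j})"
    using drop sum.remove[OF _ j, of f] sum.remove[OF _ j, of g] by (simp add: f_def g_def)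
  then have "g i = f i" if "i < k" "i \<noteq> j" for i
    using sum_mono_inv[of g "{0..<k} - {j}" f i] le that by auto
  then have "c' ! i = c ! i" if "i < k" "i \<noteq> j" for i
    using in_dclos_eq_or_ddim_less[OF clos] that unfolding f_def g_def by fastforce
  then have "c' ! i = c[j := c' ! j] ! i" if "i < k" for i
    using that len by (cases "i = j") auto
  then show ?thesis
    by (intro nth_equalityI) (simp_all add: len)
qed

lemma GL_edge_update:
  assumes "c \<in> ZL L k n" "c[j := b] \<in> ZL L k n" "j < k"
    and "in_dclos n b (c ! j)" "ddim n b + 1 = ddim n (c ! j)"
  shows "(c, c[j := b]) \<in> GL L k n"
proof -
  have "length c = k" using assms(1) by (rule ZL_length)
  then have "pdim n (c[j := b]) + 1 = pdim n c"
    using assms(3,5) sum_list_update[of j "map (ddim n) c" "ddim n b"]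
      elem_le_sum_list[of j "map (ddim n) c"]
    by (simp add: pdim_def map_update)
  moreover have "in_dclos n (c[j := b] ! i) (c ! i)" if "i < k" for i
    using assms(3,4) \<open>length c = k\<close> by (cases "i = j") (simp_all add: in_dclos_def)
  then have "list_all2 (in_dclos n) (c[j := b]) c"
    using \<open>length c = k\<close> by (simp add: list_all2_conv_all_nth)
  ultimately show ?thesis using assms(1,2) by (simp add: GL_def)
qed

lemma GL_Mbase_iff:
  assumes "n \<ge> 1" "j < k"
  shows "(c, c') \<in> GL L k n \<and> (c ! j, c' ! j) \<in> Mbase n \<longleftrightarrow>
    c \<in> ZL L k n \<and> c' \<in> ZL L k n \<and> c' = c[j := c' ! j] \<and> (c ! j, c' ! j) \<in> Mbase n"
proof
  assume "(c, c') \<in> GL L k n \<and> (c ! j, c' ! j) \<in> Mbase n"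
  then show "c \<in> ZL L k n \<and> c' \<in> ZL L k n \<and> c' = c[j := c' ! j] \<and> (c ! j, c' ! j) \<in> Mbase n"
    using GL_edge_eq_off_coordinate[of c c' L k n j] Mbase_facet[OF assms(1)] assms(2)
    by (auto simp: GL_def)
next
  assume "c \<in> ZL L k n \<and> c' \<in> ZL L k n \<and> c' = c[j := c' ! j] \<and> (c ! j, c' ! j) \<in> Mbase n"
  then show "(c, c') \<in> GL L k n \<and> (c ! j, c' ! j) \<in> Mbase n"
    using GL_edge_update[of c L k n j "c' ! j"] Mbase_facet[OF assms(1)] assms(2) by metis
qed

lemma GL_Mbase_snoc_iff:
  assumes "n \<ge> 1" "j < k"
  shows "(c, c') \<in> GL L (Suc k) n \<and> (c ! j, c' ! j) \<in> Mbase n \<longleftrightarrow>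
    (\<exists>d d' x. c = d @ [x] \<and> c' = d' @ [x] \<and> valid_dcell n x
       \<and> (d, d') \<in> GL (slice_complex L k x) k n \<and> (d ! j, d' ! j) \<in> Mbase n)"
    (is "?lhs \<longleftrightarrow> ?rhs")
proof
  assume ?lhs
  then have Z: "c \<in> ZL L (Suc k) n" "c' \<in> ZL L (Suc k) n"
    and c': "c' = c[j := c' ! j]" and M: "(c ! j, c' ! j) \<in> Mbase n"
    using GL_Mbase_iff[OF assms(1) less_SucI[OF assms(2)], of c c' L] by blast+
  obtain d x where c: "c = d @ [x]" and len: "length d = k"
    using ZL_length[OF Z(1)] by (auto simp: length_Suc_conv_rev)
  obtain b where b: "c' ! j = b" by blast
  define d' where "d' = d[j := b]"
  have c'_snoc: "c' = d' @ [x]"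
    using c' c len assms(2) by (simp add: b d'_def list_update_append)
  have nth: "c ! j = d ! j" "b = d' ! j"
    using c len assms(2) by (simp_all add: nth_append d'_def)
  have "valid_dcell n x" "d \<in> ZL (slice_complex L k x) k n" "d' \<in> ZL (slice_complex L k x) k n"
    using Z len by (simp_all add: c c'_snoc ZL_snoc_iff d'_def)
  moreover have "d' = d[j := d' ! j]"
    using len assms(2) by (simp add: d'_def)
  ultimately have "(d, d') \<in> GL (slice_complex L k x) k n \<and> (d ! j, d' ! j) \<in> Mbase n"
    using GL_Mbase_iff[OF assms, of d d' "slice_complex L k x"] M nth b by metis
  then show ?rhs
    using c c'_snoc \<open>valid_dcell n x\<close> by blast
next
  assume ?rhs
  then obtain d d' x where c: "c = d @ [x]" "c' = d' @ [x]" "valid_dcell n x"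
    and edge: "(d, d') \<in> GL (slice_complex L k x) k n" "(d ! j, d' ! j) \<in> Mbase n"
    by blast
  then have Z: "d \<in> ZL (slice_complex L k x) k n" "d' \<in> ZL (slice_complex L k x) k n"
    and d': "d' = d[j := d' ! j]"
    using GL_Mbase_iff[OF assms, of d d' "slice_complex L k x"] by blast+
  have len: "length d = k" "length d' = k" using Z by (simp_all add: ZL_length)
  have nth: "c ! j = d ! j" "c' ! j = d' ! j"
    using c len assms(2) by (simp_all add: nth_append)
  have "c' = c[j := c' ! j]"
    using c len assms(2) nth d'[symmetric] by (simp add: list_update_append1)
  moreover have "c \<in> ZL L (Suc k) n" "c' \<in> ZL L (Suc k) n"
    using Z len c by (simp_all add: ZL_snoc_iff)
  ultimately show ?lhs
    using GL_Mbase_iff[OF assms(1) less_SucI[OF assms(2)], of c c' L] edge(2) nth by simp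
qed

lemma verts_iff: "x \<in> verts E \<longleftrightarrow> (\<exists>y. (x, y) \<in> E) \<or> (\<exists>y. (y, x) \<in> E)"
  unfolding verts_def by force

lemma Mupto_snoc_iff:
  assumes "n \<ge> 1"
  shows "j \<le> k \<Longrightarrow> (c, c') \<in> Mupto L (Suc k) n j \<longleftrightarrow>
    (\<exists>d d' x. c = d @ [x] \<and> c' = d' @ [x] \<and> valid_dcell n x
       \<and> (d, d') \<in> Mupto (slice_complex L k x) k n j)"
proof (induction j arbitrary: c c')
  case 0
  then show ?case by simp
next
  case (Suc j)
  then have IH: "(c, c') \<in> Mupto L (Suc k) n j \<longleftrightarrow>
      (\<exists>d d' x. c = d @ [x] \<and> c' = d' @ [x] \<and> valid_dcell n x
         \<and> (d, d') \<in> Mupto (slice_complex L k x) k n j)" for c c'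
    by simp
  have verts_snoc: "d @ [x] \<in> verts (Mupto L (Suc k) n j) \<longleftrightarrow>
      valid_dcell n x \<and> d \<in> verts (Mupto (slice_complex L k x) k n j)" for d x
    unfolding verts_iff IH by auto
  have "(c, c') \<in> GL L (Suc k) n \<and> c \<notin> verts (Mupto L (Suc k) n j)
        \<and> c' \<notin> verts (Mupto L (Suc k) n j) \<and> (c ! j, c' ! j) \<in> Mbase n \<longleftrightarrow>
      (\<exists>d d' x. c = d @ [x] \<and> c' = d' @ [x] \<and> valid_dcell n x
         \<and> (d, d') \<in> GL (slice_complex L k x) k n \<and> d \<notin> verts (Mupto (slice_complex L k x) k n j)
         \<and> d' \<notin> verts (Mupto (slice_complex L k x) k n j) \<and> (d ! j, d' ! j) \<in> Mbase n)"
    using GL_Mbase_snoc_iff[OF assms, of j k c c' L] Suc.prems verts_snoc by auto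
  then show ?case
    unfolding Mupto.simps Un_iff mem_Collect_eq case_prod_conv IH by blast
qed

lemma unmatched_snoc_iff:
  assumes "n \<ge> 1" "length d = k"
  shows "d @ [x] \<in> ZL L (Suc k) n \<and> d @ [x] \<notin> verts (Mupto L (Suc k) n k) \<longleftrightarrow>
    valid_dcell n x \<and> d \<in> Crit (slice_complex L k x) k n"
  using Mupto_snoc_iff[OF assms(1) le_refl, where L = L] ZL_snoc_iff[OF assms(2)]
  by (auto simp: Crit_def Mmatch_def verts_iff)

lemma GL_Mbase_last_iff:
  assumes "n \<ge> 1"
  shows "(c, c') \<in> GL L (Suc k) n \<and> (c ! k, c' ! k) \<in> Mbase n \<longleftrightarrow>
    (\<exists>d a b. c = d @ [a] \<and> c' = d @ [b] \<and> length d = k \<and> (a, b) \<in> Mbase n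
       \<and> c \<in> ZL L (Suc k) n \<and> c' \<in> ZL L (Suc k) n)"
proof -
  have "c' = c[k := c' ! k] \<longleftrightarrow> (\<exists>d a b. c = d @ [a] \<and> c' = d @ [b] \<and> length d = k)"
    if "length c = Suc k" "length c' = Suc k"
    using that by (auto simp: length_Suc_conv_rev list_update_append)
  then show ?thesis
    using GL_Mbase_iff[OF assms lessI, of c c' L] ZL_length by (auto simp: nth_append)
qed

lemma Crit_snoc_iff:
  fixes L :: "nat set set"
  assumes "n \<ge> 1" "length d = k"
  defines "P y \<equiv> valid_dcell n y \<and> d \<in> Crit (slice_complex L k y) k n"
  shows "d @ [x] \<in> Crit L (Suc k) n \<longleftrightarrow>
    P x \<and> \<not> (\<exists>b. (x, b) \<in> Mbase n \<and> P b) \<and> \<not> (\<exists>a. (a, x) \<in> Mbase n \<and> P a)"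
proof -
  define M where "M = Mupto L (Suc k) n k"
  define E where "E = {(c, c'). (c, c') \<in> GL L (Suc k) n \<and> c \<notin> verts M \<and> c' \<notin> verts M
                                \<and> (c ! k, c' ! k) \<in> Mbase n}"
  have unmatched: "d @ [y] \<in> ZL L (Suc k) n \<and> d @ [y] \<notin> verts M \<longleftrightarrow> P y" for y
    unfolding M_def P_def using unmatched_snoc_iff[OF assms(1,2)] .
  have E: "(c, c') \<in> E \<longleftrightarrow> (\<exists>e a b. c = e @ [a] \<and> c' = e @ [b] \<and> length e = k \<and> (a, b) \<in> Mbase n
       \<and> c \<in> ZL L (Suc k) n \<and> c \<notin> verts M \<and> c' \<in> ZL L (Suc k) n \<and> c' \<notin> verts M)" for c c'
    unfolding E_def using GL_Mbase_last_iff[OF assms(1), of c c' L] by blast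
  have "d @ [x] \<in> Crit L (Suc k) n \<longleftrightarrow> d @ [x] \<in> ZL L (Suc k) n \<and> d @ [x] \<notin> verts M
      \<and> \<not> (\<exists>c'. (d @ [x], c') \<in> E) \<and> \<not> (\<exists>c. (c, d @ [x]) \<in> E)"
    by (auto simp: Crit_def Mmatch_def M_def E_def verts_iff)
  also have "\<dots> \<longleftrightarrow> P x \<and> \<not> (\<exists>b. (x, b) \<in> Mbase n \<and> P b) \<and> \<not> (\<exists>a. (a, x) \<in> Mbase n \<and> P a)"
    unfolding E unmatched[symmetric] using assms(2) by auto
  finally show ?thesis .
qed

lemma Mbase_partner:
  assumes "valid_dcell n x" "x \<notin> {Mn 0, Pl (n - 1), Bt}"
  obtains y where "y \<noteq> Bt" "valid_dcell n y" "(x, y) \<in> Mbase n \<or> (y, x) \<in> Mbase n"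
proof (cases x)
  case (Mn i)
  then obtain j where "i = Suc j" using assms(2) by (cases i) auto
  then show ?thesis using that[of "Pl j"] assms Mn by (auto simp: Mbase_iff valid_dcell_def)
next
  case (Pl i)
  then show ?thesis using that[of "Mn (Suc i)"] assms by (auto simp: Mbase_iff valid_dcell_def)
qed (use assms in auto)

lemma Crit_snoc:
  assumes "n \<ge> 1" "length d = k"
  shows "d @ [x] \<in> Crit L (Suc k) n \<longleftrightarrow>
      x = Mn 0 \<and> d \<in> Crit L k n
    \<or> x = Pl (n - 1) \<and> d \<in> Crit L k n \<and> d \<notin> Crit (closed_star L (Suc k)) k n
    \<or> x = Bt \<and> d \<in> Crit (closed_star L (Suc k)) k n \<and> d \<notin> Crit L k n"
proof (cases "valid_dcell n x \<and> x \<notin> {Mn 0, Pl (n - 1), Bt}")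
  case True
  then obtain y where "y \<noteq> Bt" "valid_dcell n y" "(x, y) \<in> Mbase n \<or> (y, x) \<in> Mbase n"
    using Mbase_partner by blast
  then show ?thesis
    using True unfolding Crit_snoc_iff[OF assms] by (auto simp: slice_complex_def)
next
  case False
  then show ?thesis
    unfolding Crit_snoc_iff[OF assms] Mbase_iff slice_complex_def valid_dcell_def
    using assms(1) by auto
qed

lemma Crit_length: "c \<in> Crit L k n \<Longrightarrow> length c = k"
  unfolding Crit_def by (blast dest: ZL_length)

lemma Crit_Suc:
  assumes "n \<ge> 1"
  shows "Crit L (Suc k) n =
    (ext_minus (Crit L k n) \<union> ext_plus n (Crit L k n) \<union> ext_bullet (Crit (closed_star L (Suc k)) k n))
    - (ext_bullet (Crit L k n) \<union> ext_plus n (Crit (closed_star L (Suc k)) k n))"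
proof (intro set_eqI)
  fix c
  show "c \<in> Crit L (Suc k) n \<longleftrightarrow> c \<in> (ext_minus (Crit L k n) \<union> ext_plus n (Crit L k n)
      \<union> ext_bullet (Crit (closed_star L (Suc k)) k n))
      - (ext_bullet (Crit L k n) \<union> ext_plus n (Crit (closed_star L (Suc k)) k n))"
  proof (cases "\<exists>d x. c = d @ [x] \<and> length d = k")
    case True
    then obtain d x where "c = d @ [x]" "length d = k" by blast
    then show ?thesis
      using Crit_snoc[OF assms] by (auto simp: ext_minus_def ext_plus_def ext_bullet_def)
  next
    case False
    then show ?thesis
      by (auto simp: ext_minus_def ext_plus_def ext_bullet_def length_Suc_conv_rev
          dest!: Crit_length)
  qed
qed

lemma Crit_0: "Crit L 0 n = (if {} \<in> L then {[]} else {})"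
proof -
  have "supp [] = {}" by (simp add: supp_def)
  then show ?thesis by (auto simp: Crit_def Mmatch_def ZL_def pcells_def verts_def)
qed

lemma Crit_cong:
  assumes "\<And>\<sigma>. \<sigma> \<subseteq> {1..k} \<Longrightarrow> \<sigma> \<in> L \<longleftrightarrow> \<sigma> \<in> L'"
  shows "Crit L k n = Crit L' k n"
proof -
  have "supp c \<subseteq> {1..length c}" for c
    by (auto simp: supp_def)
  then have Z: "ZL L k n = ZL L' k n"
    using assms by (auto simp: ZL_def pcells_def)
  then have "Mupto L k n j = Mupto L' k n j" for j
    by (induction j) (simp_all add: GL_def)
  then show ?thesis
    by (simp add: Crit_def Mmatch_def Z)
qed

lemma Crit_cells: "n \<ge> 1 \<Longrightarrow> c \<in> Crit L k n \<Longrightarrow> set c \<subseteq> {Mn 0, Pl (n - 1), Bt}"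
proof (induction k arbitrary: L c)
  case 0
  then show ?case by (simp add: Crit_0 split: if_splits)
next
  case (Suc k)
  then obtain d x where c: "c = d @ [x]" "length d = k"
    by (auto simp: length_Suc_conv_rev dest!: Crit_length)
  then have "x \<in> {Mn 0, Pl (n - 1), Bt}"
    "d \<in> Crit L k n \<or> d \<in> Crit (closed_star L (Suc k)) k n"
    using Suc.prems Crit_snoc[OF Suc.prems(1) c(2)] by auto
  then show ?case
    using Suc.IH[OF Suc.prems(1)] c(1) by auto
qed

lemma Crit_restr_Suc: "Crit (restr K (Suc k)) k n = Crit (restr K k) k n"
  by (rule Crit_cong) (auto simp: restr_def)

lemma Crit_closed_star_restr:
  assumes "\<And>\<sigma> \<tau>. \<sigma> \<in> K \<Longrightarrow> \<tau> \<subseteq> \<sigma> \<Longrightarrow> \<tau> \<in> K"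
  shows "Crit (closed_star (restr K (Suc k)) (Suc k)) k n = Crit (link (restr K (Suc k)) (Suc k)) k n"
  by (rule Crit_cong) (auto simp: closed_star_def link_def restr_def intro: assms)

theorem proposition3p4:
  fixes n m :: nat and K :: "nat set set"
  assumes "n \<ge> 1" and "simplicial_complex m K" and "{} \<in> K"
  shows "(1 \<le> m \<longrightarrow>
            Crit (restr K 1) 1 n = (if {1} \<in> K then {[Mn 0]} else {[Mn 0], [Pl (n - 1)]}))
       \<and> (\<forall>k \<in> {1..m - 1}.
            Crit (restr K (k + 1)) (k + 1) n =
              (ext_minus (Crit (restr K k) k n) \<union> ext_plus n (Crit (restr K k) k n)
                 \<union> ext_bullet (Crit (link (restr K (k + 1)) (k + 1)) k n))
              - (ext_bullet (Crit (restr K k) k n)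
                 \<union> ext_plus n (Crit (link (restr K (k + 1)) (k + 1)) k n)))
       \<and> (\<forall>c \<in> Crit K m n. set c \<subseteq> {Mn 0, Pl (n - 1), Bt})"
proof -
  have recursion: "Crit (restr K (Suc k)) (Suc k) n =
      (ext_minus (Crit (restr K k) k n) \<union> ext_plus n (Crit (restr K k) k n)
         \<union> ext_bullet (Crit (link (restr K (Suc k)) (Suc k)) k n))
      - (ext_bullet (Crit (restr K k) k n) \<union> ext_plus n (Crit (link (restr K (Suc k)) (Suc k)) k n))"
    for k
    using Crit_Suc[OF assms(1), of "restr K (Suc k)" k] assms(2)
    by (simp add: Crit_restr_Suc Crit_closed_star_restr simplicial_complex_def)
  have "Crit (restr K 0) 0 n = {[]}" "Crit (link (restr K 1) 1) 0 n = (if {1} \<in> K then {[]} else {})"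
    using assms(3) by (auto simp: Crit_0 restr_def link_def)
  then have "Crit (restr K 1) 1 n = (if {1} \<in> K then {[Mn 0]} else {[Mn 0], [Pl (n - 1)]})"
    using recursion[of 0] by (auto simp: ext_minus_def ext_plus_def ext_bullet_def)
  then show ?thesis
    using recursion Crit_cells[OF assms(1)] by simp
qed

end
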